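(* Let $n\ge4$ be even and $\eta$ a choice function. For every $m\in\mathbb{N}$ and every pair of distinct words $w,v\in\mathcal{A}_n^m$, $\phi^\eta_w((0,1)^2)\cap\phi^\eta_v((0,1)^2)=\emptyset$ and $\phi^\eta_w((0,1)^2)\subset(0,1)^2$.
   Context: Fix an even integer $n\ge4$ and let $\mathcal{A}_n=\{1,\dots,5n-6\}$. $\mathcal{A}_n^m$ is the set of words of length $m$ over $\mathcal{A}_n$ ($\mathcal{A}_n^0=\{\varepsilon\}$), $\mathcal{A}_n^*=\bigcup_{m\ge0}\mathcal{A}_n^m$. Define maps $\psi^1_{n,j},\psi^2_{n,j}:\mathbb{R}^2\to\mathbb{R}^2$, $j\in\mathcal{A}_n$, each of the form $x\mapsto\frac1n x+b$: for $j=1,\dots,4n-4$, $\psi^1_{n,j}=\psi^2_{n,j}$ map $[0,1]^2$ onto the $4n-4$ squares of the grid of $n^2$ closed squares of side $1/n$ in $[0,1]^2$ that meet $\partial[0,1]^2$ (fixed enumeration); for $j=4n-3+i$, $i=0,\dots,\frac n2-2$, $\psi^1_{n,j}(x)=\psi^2_{n,j}(x)=\frac1nx+(\frac12+\frac in,\frac1n)$; for $j=4n+\frac n2-4+i$, $i=0,\dots,\frac n2-2$, $\psi^1_{n,j}(x)=\frac1nx+(\frac{i+1}n,\frac2n)$ and $\psi^2_{n,j}(x)=\frac1nx+(\frac{i+1}n,\frac1n)$. A choice function is any $\eta:\mathcal{A}_n^*\to\{1,2\}$. Set $\phi^\eta_\varepsilon=\mathrm{id}$ and for $w=i_1\cdots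 i_m$, $\phi^\eta_w=\psi^{\eta(\varepsilon)}_{n,i_1}\circ\psi^{\eta(i_1)}_{n,i_2}\circ\cdots\circ\psi^{\eta(i_1\cdots i_{m-1})}_{n,i_m}$. *)

theory Defs
  imports "HOL-Analysis.Analysis"
begin

text \<open>The grid square
  [a/n,(a+1)/n] x [b/n,(b+1)/n] (a, b < n) is indexed by its corner (a,b);
  it meets the boundary of the unit square iff a = 0, a = n-1, b = 0 or b = n-1.\<close>

definition boundary_squares :: "nat \<Rightarrow> (nat \<times> nat) set" where
  "boundary_squares n = {(a,b). a < n \<and> b < n \<and> (a = 0 \<or> a = n - 1 \<or> b = 0 \<or> b = n - 1)}"

definition alphabet :: "nat \<Rightarrow> nat set" where
  "alphabet n = {1..5*n-6}"

text \<open>Translation part of psi^k_{n,j}; e is the fixed enumeration of the boundary squares.\<close>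
definition psi_offset :: "nat \<Rightarrow> (nat \<Rightarrow> nat \<times> nat) \<Rightarrow> nat \<Rightarrow> nat \<Rightarrow> real \<times> real" where
  "psi_offset n e k j =
    (if 1 \<le> j \<and> j \<le> 4*n-4 then (real (fst (e j)) / real n, real (snd (e j)) / real n)
     else if 4*n-3 \<le> j \<and> j \<le> 4*n-3 + (n div 2 - 2) then
       (1/2 + real (j - (4*n-3)) / real n, 1 / real n)
     else if 4*n + n div 2 - 4 \<le> j \<and> j \<le> 4*n + n div 2 - 4 + (n div 2 - 2) then
       (if k = 1 then (real (j - (4*n + n div 2 - 4) + 1) / real n, 2 / real n)
        else (real (j - (4*n + n div 2 - 4) + 1) / real n, 1 / real n))
     else (0, 0))"

definition psi :: "nat \<Rightarrow> (nat \<Rightarrow> nat \<times> nat) \<Rightarrow> nat \<Rightarrow> nat \<Rightarrow> real \<times> real \<Rightarrow> real \<times> real" where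
  "psi n e k j x = (1 / real n) *\<^sub>R x + psi_offset n e k j"

text \<open>phi^eta_w; the recursion shifts eta so that the letter i_{l+1} uses eta(i_1...i_l).\<close>
fun phi :: "nat \<Rightarrow> (nat \<Rightarrow> nat \<times> nat) \<Rightarrow> (nat list \<Rightarrow> nat) \<Rightarrow> nat list \<Rightarrow> real \<times> real \<Rightarrow> real \<times> real" where
  "phi n e \<eta> [] = id"
| "phi n e \<eta> (i # w) = psi n e (\<eta> []) i \<circ> phi n e (\<lambda>u. \<eta> (i # u)) w"

definition open_unit_square :: "(real \<times> real) set" where
  "open_unit_square = {0<..<1} \<times> {0<..<1}"

end

theory Submission
  imports Defs
begin

text \<open>Each map psi^k_{n,j} sends the open unit square onto the open grid square of side 1/n at a
  position determined by j and k. For a fixed k distinct letters get distinct positions: the first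
  4n-4 letters enumerate the boundary squares, while the remaining ones lie in rows 1 and 2, away
  from the boundary, in pairwise distinct columns. Since every grid square lies in the unit square,
  induction on the words gives the inclusion; for the disjointness, two distinct words of the same
  length either start with different letters (disjoint grid squares) or with the same letter, and
  then the injectivity of that letter's map reduces the claim to the shorter tails.\<close>

definition grid_cell :: "nat \<Rightarrow> nat \<times> nat \<Rightarrow> (real \<times> real) set" where
  "grid_cell n c = {real (fst c) / real n <..< (real (fst c) + 1) / real n}
                 \<times> {real (snd c) / real n <..< (real (snd c) + 1) / real n}"

lemma grid_cell_subset_open_unit_square:
  assumes "fst c < n" "snd c < n"
  shows "grid_cell n c \<subseteq> open_unit_square"
proof -
  have "{real a / real n <..< (real a + 1) / real n} \<subseteq> {0<..<1}" if "a < n" for a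
  proof -
    from that have "(real a + 1) / real n \<le> 1" by simp
    then show ?thesis by (simp add: greaterThanLessThan_subseteq_greaterThanLessThan)
  qed
  then show ?thesis
    using assms unfolding grid_cell_def open_unit_square_def by blast
qed

lemma disjoint_grid_intervals:
  assumes "a \<noteq> b" "n > 0"
  shows "{real a / real n <..< (real a + 1) / real n} \<inter> {real b / real n <..< (real b + 1) / real n} = {}"
proof -
  have "real a + 1 \<le> real b \<or> real b + 1 \<le> real a"
    using assms(1) by linarith
  then have "(real a + 1) / real n \<le> real b / real n \<or> (real b + 1) / real n \<le> real a / real n"
    using assms(2) by (auto simp: divide_right_mono)
  then show ?thesis by auto
qed

lemma disjoint_grid_cells:
  assumes "c \<noteq> d" "n > 0"
  shows "grid_cell n c \<inter> grid_cell n d = {}"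
proof (cases "fst c = fst d")
  case True
  with assms(1) have "snd c \<noteq> snd d" by (simp add: prod_eq_iff)
  then show ?thesis
    using disjoint_grid_intervals[OF _ assms(2)] unfolding grid_cell_def by blast
next
  case False
  then show ?thesis
    using disjoint_grid_intervals[OF _ assms(2)] unfolding grid_cell_def by blast
qed

definition letter_cell :: "nat \<Rightarrow> (nat \<Rightarrow> nat \<times> nat) \<Rightarrow> nat \<Rightarrow> nat \<Rightarrow> nat \<times> nat" where
  "letter_cell n e k j =
    (if 1 \<le> j \<and> j \<le> 4*n-4 then e j
     else if 4*n-3 \<le> j \<and> j \<le> 4*n-3 + (n div 2 - 2) then (n div 2 + (j - (4*n-3)), 1)
     else if 4*n + n div 2 - 4 \<le> j \<and> j \<le> 4*n + n div 2 - 4 + (n div 2 - 2) then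
       (j - (4*n + n div 2 - 4) + 1, if k = 1 then 2 else 1)
     else (0, 0))"

lemma psi_offset_letter_cell:
  assumes "even n" "n > 0"
  shows "psi_offset n e k j =
    (real (fst (letter_cell n e k j)) / real n, real (snd (letter_cell n e k j)) / real n)"
proof -
  have half: "1/2 + real r / real n = real (n div 2 + r) / real n" for r
    using assms by (auto elim!: evenE simp: field_simps)
  show ?thesis
    unfolding psi_offset_def letter_cell_def by (simp add: half del: of_nat_diff)
qed

lemma psi_image_subset_grid_cell:
  assumes "even n" "n > 0"
  shows "psi n e k j ` open_unit_square \<subseteq> grid_cell n (letter_cell n e k j)"
proof
  fix y assume "y \<in> psi n e k j ` open_unit_square"
  then obtain x1 x2 where x: "y = psi n e k j (x1, x2)" "0 < x1" "x1 < 1" "0 < x2" "x2 < 1"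
    unfolding open_unit_square_def by auto
  obtain a b where ab: "letter_cell n e k j = (a, b)" by fastforce
  have "y = ((x1 + a) / n, (x2 + b) / n)"
    unfolding x(1) psi_def psi_offset_letter_cell[OF assms] ab by (simp add: add_divide_distrib)
  then show "y \<in> grid_cell n (letter_cell n e k j)"
    unfolding grid_cell_def ab using x assms(2) by (simp add: divide_strict_right_mono)
qed

lemma inj_psi:
  assumes "n > 0"
  shows "inj (psi n e k j)"
  using assms by (intro injI) (simp add: psi_def)

lemma letter_cell_boundary_letter:
  "j \<in> {1..4*n-4} \<Longrightarrow> letter_cell n e k j = e j"
  unfolding letter_cell_def by simp

text \<open>Stated without truncated subtraction, so that the consequences below are plain linear
  arithmetic.\<close>

lemma letter_cell_interior:
  assumes "n = 2*q" "q \<ge> 2" "j \<in> alphabet n" "4*n-4 < j"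
  shows "(8*q \<le> j + 3 \<and> j + 5 \<le> 9*q \<and> fst (letter_cell n e k j) + 7*q = j + 3
          \<and> snd (letter_cell n e k j) = 1)
       \<or> (9*q \<le> j + 4 \<and> j + 6 \<le> 10*q \<and> fst (letter_cell n e k j) + 9*q = j + 5
          \<and> snd (letter_cell n e k j) \<in> {1,2})"
proof -
  have half: "n div 2 = q" using assms(1) by simp
  from assms have j: "8*q - 3 \<le> j" "j \<le> 10*q - 6" unfolding alphabet_def by auto
  show ?thesis
  proof (cases "j \<le> 9*q-5")
    case True
    with j assms(1,2) have "letter_cell n e k j = (j + 3 - 7*q, 1)"
      unfolding letter_cell_def half by auto
    with True j assms(2) show ?thesis by auto
  next
    case False
    with j assms(1,2) have "letter_cell n e k j = (j + 5 - 9*q, if k = 1 then 2 else 1)"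
      unfolding letter_cell_def half by auto
    with False j assms(2) show ?thesis by auto
  qed
qed

lemma interior_letters_eq_if_same_column:
  assumes "n = 2*q" "q \<ge> 2" "i \<in> alphabet n" "j \<in> alphabet n" "4*n-4 < i" "4*n-4 < j"
    and "fst (letter_cell n e k i) = fst (letter_cell n e k j)"
  shows "i = j"
  using letter_cell_interior[OF assms(1-3,5), where e=e and k=k]
    letter_cell_interior[OF assms(1,2,4,6), where e=e and k=k] assms(7)
  by (elim disjE conjE) linarith+

lemma letter_cell_interior_bounds:
  assumes "n = 2*q" "q \<ge> 2" "j \<in> alphabet n" "4*n-4 < j"
  shows "1 \<le> fst (letter_cell n e k j) \<and> fst (letter_cell n e k j) + 2 \<le> n
       \<and> snd (letter_cell n e k j) \<in> {1, 2}"
  using letter_cell_interior[OF assms, where e=e and k=k] assms(1) by auto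

lemma phi_Cons_image:
  "phi n e \<eta> (i # w) ` A = psi n e (\<eta> []) i ` phi n e (\<lambda>u. \<eta> (i # u)) w ` A"
  by (simp add: image_comp)

context
  fixes n :: nat and e :: "nat \<Rightarrow> nat \<times> nat"
  assumes even_n: "even n" and n_ge_4: "n \<ge> 4"
    and boundary_enum: "bij_betw e {1..4*n-4} (boundary_squares n)"
begin

lemma half_n:
  obtains q where "n = 2*q" "q \<ge> 2"
  using even_n n_ge_4 by (auto elim!: evenE)

lemma letter_cell_in_boundary_squares_iff:
  assumes "j \<in> alphabet n"
  shows "letter_cell n e k j \<in> boundary_squares n \<longleftrightarrow> j \<le> 4*n-4"
proof (cases "j \<le> 4*n-4")
  case True
  with assms have "j \<in> {1..4*n-4}"
    unfolding alphabet_def by simp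
  with boundary_enum True show ?thesis
    by (simp add: letter_cell_boundary_letter bij_betw_apply)
next
  case False
  obtain q where q: "n = 2*q" "q \<ge> 2" by (rule half_n)
  with False have "1 \<le> fst (letter_cell n e k j) \<and> fst (letter_cell n e k j) + 2 \<le> n
      \<and> snd (letter_cell n e k j) \<in> {1, 2}"
    using letter_cell_interior_bounds[OF q assms] by simp
  with n_ge_4 False show ?thesis
    unfolding boundary_squares_def by (auto simp: case_prod_beta)
qed

lemma letter_cell_less:
  assumes "j \<in> alphabet n"
  shows "fst (letter_cell n e k j) < n \<and> snd (letter_cell n e k j) < n"
proof (cases "j \<le> 4*n-4")
  case True
  with letter_cell_in_boundary_squares_iff[OF assms] show ?thesis
    unfolding boundary_squares_def by (auto simp: case_prod_beta)
next
  case False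
  obtain q where q: "n = 2*q" "q \<ge> 2" by (rule half_n)
  with letter_cell_interior_bounds[OF q assms, where e=e and k=k] False show ?thesis by auto
qed

lemma inj_on_letter_cell: "inj_on (letter_cell n e k) (alphabet n)"
proof (rule inj_onI)
  fix i j assume i: "i \<in> alphabet n" and j: "j \<in> alphabet n"
    and eq: "letter_cell n e k i = letter_cell n e k j"
  from eq have same_kind: "i \<le> 4*n-4 \<longleftrightarrow> j \<le> 4*n-4"
    using letter_cell_in_boundary_squares_iff[OF i, where k=k]
      letter_cell_in_boundary_squares_iff[OF j, where k=k]
    by simp
  show "i = j"
  proof (cases "i \<le> 4*n-4")
    case True
    with same_kind i j have "i \<in> {1..4*n-4}" "j \<in> {1..4*n-4}"
      unfolding alphabet_def by auto
    moreover from this eq have "e i = e j"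
      by (metis letter_cell_boundary_letter)
    ultimately show ?thesis
      using boundary_enum unfolding bij_betw_def by (auto dest: inj_onD)
  next
    case False
    obtain q where q: "n = 2*q" "q \<ge> 2" by (rule half_n)
    from False same_kind have "4*n-4 < i" "4*n-4 < j" by auto
    moreover from eq have "fst (letter_cell n e k i) = fst (letter_cell n e k j)" by simp
    ultimately show ?thesis
      using interior_letters_eq_if_same_column[OF q i j] by blast
  qed
qed

lemma phi_image_subset_open_unit_square:
  assumes "w \<in> lists (alphabet n)"
  shows "phi n e \<eta> w ` open_unit_square \<subseteq> open_unit_square"
  using assms
proof (induction w arbitrary: \<eta>)
  case Nil
  then show ?case by simp
next
  case (Cons i w)
  have "phi n e \<eta> (i # w) ` open_unit_square
      = psi n e (\<eta> []) i ` phi n e (\<lambda>u. \<eta> (i # u)) w ` open_unit_square"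
    by (rule phi_Cons_image)
  also have "\<dots> \<subseteq> psi n e (\<eta> []) i ` open_unit_square"
    using Cons.IH by (rule image_mono)
  also have "\<dots> \<subseteq> grid_cell n (letter_cell n e (\<eta> []) i)"
    using even_n n_ge_4 by (simp add: psi_image_subset_grid_cell)
  also have "\<dots> \<subseteq> open_unit_square"
    using letter_cell_less[OF Cons.hyps(1)] by (simp add: grid_cell_subset_open_unit_square)
  finally show ?case .
qed

lemma phi_Cons_image_subset_grid_cell:
  assumes "w \<in> lists (alphabet n)"
  shows "phi n e \<eta> (i # w) ` open_unit_square \<subseteq> grid_cell n (letter_cell n e (\<eta> []) i)"
proof -
  have "phi n e \<eta> (i # w) ` open_unit_square
      = psi n e (\<eta> []) i ` phi n e (\<lambda>u. \<eta> (i # u)) w ` open_unit_square"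
    by (rule phi_Cons_image)
  also have "\<dots> \<subseteq> psi n e (\<eta> []) i ` open_unit_square"
    using phi_image_subset_open_unit_square[OF assms] by (rule image_mono)
  also have "\<dots> \<subseteq> grid_cell n (letter_cell n e (\<eta> []) i)"
    using even_n n_ge_4 by (simp add: psi_image_subset_grid_cell)
  finally show ?thesis .
qed

lemma phi_images_disjoint:
  assumes "w \<in> lists (alphabet n)" "v \<in> lists (alphabet n)" "length w = length v" "w \<noteq> v"
  shows "phi n e \<eta> w ` open_unit_square \<inter> phi n e \<eta> v ` open_unit_square = {}"
  using assms
proof (induction w arbitrary: v \<eta>)
  case Nil
  then show ?case by simp
next
  case (Cons i w)
  from Cons.prems obtain j v' where v: "v = j # v'" "j \<in> alphabet n" "v' \<in> lists (alphabet n)"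
    by (cases v) auto
  show ?case
  proof (cases "i = j")
    case True
    let ?\<eta>' = "\<lambda>u. \<eta> (i # u)"
    have "phi n e ?\<eta>' w ` open_unit_square \<inter> phi n e ?\<eta>' v' ` open_unit_square = {}"
      using Cons.prems v True by (intro Cons.IH) auto
    then have "psi n e (\<eta> []) i ` phi n e ?\<eta>' w ` open_unit_square
             \<inter> psi n e (\<eta> []) i ` phi n e ?\<eta>' v' ` open_unit_square = {}"
      using inj_psi n_ge_4 by (simp add: image_Int[symmetric])
    then show ?thesis
      unfolding v(1) True phi_Cons_image .
  next
    case False
    with Cons.hyps(1) v(2) have "letter_cell n e (\<eta> []) i \<noteq> letter_cell n e (\<eta> []) j"
      using inj_on_letter_cell by (auto dest: inj_onD)
    then have "grid_cell n (letter_cell n e (\<eta> []) i) \<inter> grid_cell n (letter_cell n e (\<eta> []) j) = {}"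
      using disjoint_grid_cells n_ge_4 by simp
    then show ?thesis
      using phi_Cons_image_subset_grid_cell Cons.hyps(2) v by blast
  qed
qed

end

theorem lemma4p2:
  fixes n :: nat and e :: "nat \<Rightarrow> nat \<times> nat" and \<eta> :: "nat list \<Rightarrow> nat"
    and m :: nat and w v :: "nat list"
  assumes "even n" and "n \<ge> 4"
    and "bij_betw e {1..4*n-4} (boundary_squares n)"
    and "\<forall>u. \<eta> u \<in> {1, 2}"
    and "w \<in> lists (alphabet n)" and "v \<in> lists (alphabet n)"
    and "length w = m" and "length v = m" and "w \<noteq> v"
  shows "phi n e \<eta> w ` open_unit_square \<inter> phi n e \<eta> v ` open_unit_square = {}
       \<and> phi n e \<eta> w ` open_unit_square \<subseteq> open_unit_square"
  using phi_images_disjoint[OF assms(1-3,5,6)] phi_image_subset_open_unit_square[OF assms(1-3,5)]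
    assms(7-9) by simp

end
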